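(* Let $p$ be a prime and let $n\geq 1$, $k\geq 1$ be integers. For $s\geq k$ and $j\geq 0$ define numbers $M(t_s^{p^j})$ recursively by: $M(t_s^{p^j})=2s-1$ if $k\leq s\leq n+k-1$, and $$M(t_{s}^{p^j})=\max\{2s-1,\ p\,M(t_{s-n}^{p^{j+n-1}})+1\}\quad\text{if } s\geq n+k.$$ Let $s_0=\max\left\{\left[\frac{2pn+p-2}{2(p-1)}\right],\ n+k-1\right\}$, where $[x]$ denotes the integer part of $x$. Then: (1) $M(t_{s}^{p^j})>M(t_{s-1}^{p^j})+1$ (for $s>k$); (2) for $k\leq s\leq s_0$, $M(t_s^{p^j})=2s-1$; (3) for $s>s_0$, $p\,M(t_{s-n}^{p^j})+1\geq 2s-1$ and $M(t_s^{p^j})= p\,M(t_{s-n}^{p^{j}})+1$.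
   Context: The numbers $M(t_s^{p^j})$ are the "May filtrations" of the elements $t_s^{p^j}$ of the Hopf algebra $S(n,k)=\mathbb{Z}/p[t_k,t_{k+1},\dots]/(t_s^{p^n}-t_s)$; for this statement only the recursive definition above is needed. *)

theory Defs
  imports "HOL-Computational_Algebra.Primes"
begin

text \<open>May filtration M(t_s^{p^j}) = Mfilt p n k s j, defined for s \<ge> k and n \<ge> 1.
  Outside that range (n = 0 or s < k) the value is a dummy 0 and never used.\<close>
function Mfilt :: "nat \<Rightarrow> nat \<Rightarrow> nat \<Rightarrow> nat \<Rightarrow> nat \<Rightarrow> nat" where
  "Mfilt p n k s j =
     (if n = 0 \<or> s < k then 0
      else if s \<le> n + k - 1 then 2 * s - 1
      else max (2 * s - 1) (p * Mfilt p n k (s - n) (j + n - 1) + 1))"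
  by pat_completeness auto
termination
  by (relation "measure (\<lambda>(p, n, k, s, j). s)") auto

definition s0 :: "nat \<Rightarrow> nat \<Rightarrow> nat \<Rightarrow> nat" where
  "s0 p n k = max ((2 * p * n + p - 2) div (2 * (p - 1))) (n + k - 1)"

end

theory Submission
  imports Defs
begin

text \<open>The filtration does not depend on \<open>j\<close>, so the recursion is
  \<open>M s = max (2s - 1) (p M (s - n) + 1)\<close>. For \<open>s > n\<close> the two candidates compare as
  \<open>p (2(s - n) - 1) + 1 \<le> 2s - 1\<close> iff \<open>s \<le> (2pn + p - 2) div (2(p - 1))\<close>; this lets
  \<open>M s = 2s - 1\<close> propagate up to \<open>s\<^sub>0\<close>, while beyond \<open>s\<^sub>0\<close> the lower bound
  \<open>M (s - n) \<ge> 2(s - n) - 1\<close> makes the second candidate win.\<close>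

declare Mfilt.simps [simp del]

lemma Mfilt_indep_exponent: "Mfilt p n k s j = Mfilt p n k s j'"
proof (induction s arbitrary: j j' rule: less_induct)
  case (less s)
  show ?case
  proof (cases "n = 0 \<or> s < k \<or> s \<le> n + k - 1")
    case True
    then show ?thesis by (subst (1 2) Mfilt.simps) auto
  next
    case False
    then have "Mfilt p n k (s - n) (j + n - 1) = Mfilt p n k (s - n) (j' + n - 1)"
      using less.IH[of "s - n"] by auto
    with False show ?thesis by (subst (1 2) Mfilt.simps) auto
  qed
qed

lemma Mfilt_base:
  assumes "n \<ge> 1" and "k \<le> s" and "s \<le> n + k - 1"
  shows "Mfilt p n k s j = 2 * s - 1"
  using assms by (subst Mfilt.simps) auto

lemma Mfilt_rec:
  assumes "n \<ge> 1" and "n + k \<le> s"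
  shows "Mfilt p n k s j = max (2 * s - 1) (p * Mfilt p n k (s - n) j + 1)"
  using assms Mfilt_indep_exponent[of p n k "s - n" "j + n - 1" j]
  by (subst Mfilt.simps) auto

lemma Mfilt_ge:
  assumes "n \<ge> 1" and "k \<le> s"
  shows "2 * s - 1 \<le> Mfilt p n k s j"
  using assms by (subst Mfilt.simps) auto

lemma Mfilt_step_ge:
  assumes "n \<ge> 1" and "k \<ge> 1" and "p \<ge> 1" and "k < s"
  shows "Mfilt p n k (s - 1) j + 2 \<le> Mfilt p n k s j"
  using assms(4)
proof (induction s rule: less_induct)
  case (less s)
  show ?case
  proof (cases "n + k \<le> s - 1")
    case True
    have "Mfilt p n k (s - 1 - n) j + 2 \<le> Mfilt p n k (s - n) j"
      using less.IH[of "s - n"] True assms by (simp add: diff_commute)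
    then have "p * (Mfilt p n k (s - 1 - n) j + 2) \<le> p * Mfilt p n k (s - n) j"
      by (rule mult_le_mono2)
    then have "p * Mfilt p n k (s - 1 - n) j + 2 \<le> p * Mfilt p n k (s - n) j"
      using assms(3) by (simp add: add_mult_distrib2)
    moreover have "n + k \<le> s" using True by simp
    ultimately show ?thesis
      using True Mfilt_rec[OF assms(1), of k s p j] Mfilt_rec[OF assms(1), of k "s - 1" p j]
      by (simp add: max_def) linarith
  next
    case False
    then show ?thesis
      using less.prems assms Mfilt_base[of n k "s - 1" p j] Mfilt_ge[of n k s p j] by auto
  qed
qed

lemma le_s0_bound_iff:
  fixes p n s :: nat
  assumes "p \<ge> 2" and "n < s"
  shows "s \<le> (2 * p * n + p - 2) div (2 * (p - 1)) \<longleftrightarrow> p * (2 * (s - n) - 1) + 1 \<le> 2 * s - 1"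
proof -
  obtain q m where q: "p = q + 2" and m: "s = n + m + 1"
    using assms by (metis add.commute le_add_diff_inverse less_imp_Suc_add add_Suc_right Suc_eq_plus1)
  have "s \<le> (2 * p * n + p - 2) div (2 * (p - 1)) \<longleftrightarrow> s * (2 * (p - 1)) \<le> 2 * p * n + p - 2"
    using assms(1) by (intro less_eq_div_iff_mult_less_eq) simp
  also have "\<dots> \<longleftrightarrow> 2 * q * m + q + 2 * m + 2 \<le> 2 * n"
    unfolding q m by (simp add: algebra_simps)
  also have "\<dots> \<longleftrightarrow> p * (2 * (s - n) - 1) + 1 \<le> 2 * s - 1"
    unfolding q m by (simp add: algebra_simps)
  finally show ?thesis .
qed

lemma Mfilt_le_s0:
  assumes "n \<ge> 1" and "k \<ge> 1" and "p \<ge> 2" and "k \<le> s" and "s \<le> s0 p n k"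
  shows "Mfilt p n k s j = 2 * s - 1"
  using assms(4,5)
proof (induction s rule: less_induct)
  case (less s)
  show ?case
  proof (cases "s \<le> n + k - 1")
    case True
    then show ?thesis using Mfilt_base assms less.prems by blast
  next
    case False
    then have nks: "n + k \<le> s" and "s \<le> (2 * p * n + p - 2) div (2 * (p - 1))"
      using less.prems unfolding s0_def by auto
    then have "p * (2 * (s - n) - 1) + 1 \<le> 2 * s - 1"
      using le_s0_bound_iff[OF assms(3), of n s] assms(2) by simp
    moreover have "Mfilt p n k (s - n) j = 2 * (s - n) - 1"
      using less.IH[of "s - n"] less.prems assms nks by auto
    ultimately show ?thesis using Mfilt_rec[OF assms(1) nks] by simp
  qed
qed

lemma Mfilt_gt_s0:
  assumes "n \<ge> 1" and "k \<ge> 1" and "p \<ge> 2" and "s0 p n k < s"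
  shows "2 * s - 1 \<le> p * Mfilt p n k (s - n) j + 1"
    and "Mfilt p n k s j = p * Mfilt p n k (s - n) j + 1"
proof -
  have nks: "n + k \<le> s" and "\<not> s \<le> (2 * p * n + p - 2) div (2 * (p - 1))"
    using assms unfolding s0_def by auto
  then have "2 * s - 1 \<le> p * (2 * (s - n) - 1) + 1"
    using le_s0_bound_iff[OF assms(3), of n s] assms(2) by simp
  also have "\<dots> \<le> p * Mfilt p n k (s - n) j + 1"
    using Mfilt_ge[OF assms(1), of k "s - n" p j] nks by simp
  finally show "2 * s - 1 \<le> p * Mfilt p n k (s - n) j + 1" .
  then show "Mfilt p n k s j = p * Mfilt p n k (s - n) j + 1"
    using Mfilt_rec[OF assms(1) nks] by simp
qed

theorem lemma2p4:
  fixes p n k :: nat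
  assumes "prime p" and "n \<ge> 1" and "k \<ge> 1"
  shows "(\<forall>s j. s > k \<longrightarrow> Mfilt p n k s j > Mfilt p n k (s - 1) j + 1)
       \<and> (\<forall>s j. k \<le> s \<and> s \<le> s0 p n k \<longrightarrow> Mfilt p n k s j = 2 * s - 1)
       \<and> (\<forall>s j. s > s0 p n k \<longrightarrow>
              p * Mfilt p n k (s - n) j + 1 \<ge> 2 * s - 1
            \<and> Mfilt p n k s j = p * Mfilt p n k (s - n) j + 1)"
proof -
  have p2: "p \<ge> 2" using assms(1) prime_ge_2_nat by blast
  have "Mfilt p n k (s - 1) j + 1 < Mfilt p n k s j" if "k < s" for s j
    using Mfilt_step_ge[OF assms(2,3) _ that, of p j] p2 by simp
  then show ?thesis
    using Mfilt_le_s0[OF assms(2,3) p2] Mfilt_gt_s0[OF assms(2,3) p2] by blast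
qed

end
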